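(* Let $\mathcal{J}=(a,b)$ be a finite interval, $m\geq 3$, $Q\in L_1(\mathcal{J};\mathbb{C})$, and let $\widetilde Q=Q+c$ for a constant $c\in\mathbb{C}$. Let $L_{\max}(Q),L_{\min}(Q)$ and $L_{\max}(\widetilde Q),L_{\min}(\widetilde Q)$ be the maximal and minimal quasi-differential operators in $L_2(\mathcal{J};\mathbb{C})$ constructed from $Q$ and from $\widetilde Q$ respectively. Then $L_{\max}(\widetilde Q)=L_{\max}(Q)$ and $L_{\min}(\widetilde Q)=L_{\min}(Q)$ (equal domains and equal actions).
   Context: For $P\in L_1(\mathcal{J};\mathbb{C})$ define quasi-derivatives $D^{[k]}_Py=y^{(k)}$ for $k=0,\dots,m-2$; $D^{[m-1]}_Py=y^{(m-1)}+i^{-m}Py$; $D^{[m]}_Py=(D^{[m-1]}_Py)'-i^{-m}P\,D^{[1]}_Py$. The maximal operator $L_{\max}(P)$ acts by $y\mapsto i^mD^{[m]}_Py$ on the domain $\{y: D^{[k]}_Py\in AC([a,b];\mathbb{C}),\ k=0,\dots,m-1,\ D^{[m]}_Py\in L_2(\mathcal{J};\mathbb{C})\}$. The minimal operator $L_{\min}(P)$ is the restriction of $L_{\max}(P)$ to $\{y\in\operatorname{Dom}L_{\max}(P): D^{[k]}_Py(a)=D^{[k]}_Py(b)=0,\ k=0,\dots,m-1\}$. These regularize the formal expression $i^my^{(m)}+qy$ with $q=P'$ in the distributional sense. *)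

theory Defs
  imports "HOL-Analysis.Analysis"
begin

definition abs_cont_on :: "(real \<Rightarrow> complex) \<Rightarrow> real \<Rightarrow> real \<Rightarrow> bool" where
  "abs_cont_on f a b \<longleftrightarrow>
     (\<forall>\<epsilon>>0. \<exists>\<delta>>0. \<forall>(n::nat) (s::nat \<Rightarrow> real) (t::nat \<Rightarrow> real).
        (\<forall>i<n. a \<le> s i \<and> s i \<le> t i \<and> t i \<le> b) \<and>
        (\<forall>i<n. \<forall>j<n. i \<noteq> j \<longrightarrow> t i \<le> s j \<or> t j \<le> s i) \<and>
        (\<Sum>i<n. t i - s i) < \<delta>
        \<longrightarrow> (\<Sum>i<n. norm (f (t i) - f (s i))) < \<epsilon>)"

definition L1_on :: "real \<Rightarrow> real \<Rightarrow> (real \<Rightarrow> complex) \<Rightarrow> bool" where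
  "L1_on a b f \<longleftrightarrow> integrable (lebesgue_on {a<..<b}) f"

definition L2_on :: "real \<Rightarrow> real \<Rightarrow> (real \<Rightarrow> complex) \<Rightarrow> bool" where
  "L2_on a b f \<longleftrightarrow> f \<in> borel_measurable (lebesgue_on {a<..<b}) \<and>
                   integrable (lebesgue_on {a<..<b}) (\<lambda>x. (norm (f x))\<^sup>2)"

text \<open>d is a family of quasi-derivatives of y w.r.t. P:
  d k = D^[k]_P y for k = 0..m. Derivatives of absolutely continuous functions
  are understood almost everywhere on (a,b).\<close>
definition quasi_derivs ::
    "nat \<Rightarrow> real \<Rightarrow> real \<Rightarrow> (real \<Rightarrow> complex) \<Rightarrow> (real \<Rightarrow> complex) \<Rightarrow> (nat \<Rightarrow> real \<Rightarrow> complex) \<Rightarrow> bool" where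
  "quasi_derivs m a b P y d \<longleftrightarrow>
     (\<forall>x\<in>{a..b}. d 0 x = y x) \<and>
     (\<forall>k<m. abs_cont_on (d k) a b) \<and>
     (\<forall>k. k + 1 \<le> m - 2 \<longrightarrow>
        (AE x in lebesgue_on {a<..<b}. (d k has_vector_derivative d (k + 1) x) (at x))) \<and>
     (AE x in lebesgue_on {a<..<b}.
        (d (m - 2) has_vector_derivative (d (m - 1) x - inverse (\<i> ^ m) * P x * y x)) (at x)) \<and>
     (AE x in lebesgue_on {a<..<b}.
        (d (m - 1) has_vector_derivative (d m x + inverse (\<i> ^ m) * P x * d 1 x)) (at x))"

definition L_max_graph :: "nat \<Rightarrow> real \<Rightarrow> real \<Rightarrow> (real \<Rightarrow> complex) \<Rightarrow>
    ((real \<Rightarrow> complex) \<times> (real \<Rightarrow> complex)) set" where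
  "L_max_graph m a b P = {(y, f). \<exists>d. quasi_derivs m a b P y d \<and> L2_on a b (d m) \<and>
       (AE x in lebesgue_on {a<..<b}. f x = \<i> ^ m * d m x)}"

definition L_min_graph :: "nat \<Rightarrow> real \<Rightarrow> real \<Rightarrow> (real \<Rightarrow> complex) \<Rightarrow>
    ((real \<Rightarrow> complex) \<times> (real \<Rightarrow> complex)) set" where
  "L_min_graph m a b P = {(y, f). \<exists>d. quasi_derivs m a b P y d \<and> L2_on a b (d m) \<and>
       (\<forall>k<m. d k a = 0 \<and> d k b = 0) \<and>
       (AE x in lebesgue_on {a<..<b}. f x = \<i> ^ m * d m x)}"

end

theory Submission
  imports Defs
begin

text \<open>Replacing \<open>P\<close> by \<open>P + c\<close> changes only the quasi-derivative \<open>D^[m-1] y\<close>, which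
  gains the absolutely continuous term \<open>i^-m c y\<close>. Its derivative \<open>i^-m c y' = i^-m c D^[1] y\<close>
  is exactly the extra term in the defining equation of \<open>D^[m]\<close>, so \<open>D^[m] y\<close>, and with it
  the operator, is unchanged; boundary values that vanish for \<open>P\<close> also vanish for \<open>P + c\<close>.
  This gives one inclusion of graphs, and shifting back by \<open>-c\<close> the other.\<close>

definition nonoverlapping_intervals :: "real \<Rightarrow> real \<Rightarrow> nat \<Rightarrow> (nat \<Rightarrow> real) \<Rightarrow> (nat \<Rightarrow> real) \<Rightarrow> bool"
  where "nonoverlapping_intervals a b n s t \<longleftrightarrow>
    (\<forall>i<n. a \<le> s i \<and> s i \<le> t i \<and> t i \<le> b) \<and>
    (\<forall>i<n. \<forall>j<n. i \<noteq> j \<longrightarrow> t i \<le> s j \<or> t j \<le> s i)"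

lemma abs_cont_on_iff:
  "abs_cont_on f a b \<longleftrightarrow> (\<forall>\<epsilon>>0. \<exists>\<delta>>0. \<forall>n s t.
     nonoverlapping_intervals a b n s t \<and> (\<Sum>i<n. t i - s i) < \<delta>
     \<longrightarrow> (\<Sum>i<n. norm (f (t i) - f (s i))) < \<epsilon>)"
  by (simp add: abs_cont_on_def nonoverlapping_intervals_def conj_assoc)

lemma abs_cont_on_add_cmult:
  assumes f: "abs_cont_on f a b" and g: "abs_cont_on g a b"
  shows "abs_cont_on (\<lambda>x. f x + k * g x) a b"
  unfolding abs_cont_on_iff
proof (intro allI impI)
  fix \<epsilon> :: real assume "\<epsilon> > 0"
  define K where "K = 2 * (norm k + 1)"
  have "K > 0" unfolding K_def by (simp add: add_nonneg_pos)
  have "norm k * (\<epsilon> / K) \<le> (norm k + 1) * (\<epsilon> / K)"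
    using \<open>\<epsilon> > 0\<close> \<open>K > 0\<close> by (intro mult_right_mono) auto
  also have "\<dots> = \<epsilon> / 2" using \<open>K > 0\<close> by (simp add: K_def field_simps)
  finally have g_weight: "norm k * (\<epsilon> / K) \<le> \<epsilon> / 2" .
  obtain \<delta>f where "\<delta>f > 0" and \<delta>f: "\<And>n s t. nonoverlapping_intervals a b n s t \<Longrightarrow>
      (\<Sum>i<n. t i - s i) < \<delta>f \<Longrightarrow> (\<Sum>i<n. norm (f (t i) - f (s i))) < \<epsilon> / 2"
    using f[unfolded abs_cont_on_iff, rule_format, of "\<epsilon> / 2"] \<open>\<epsilon> > 0\<close> by auto
  obtain \<delta>g where "\<delta>g > 0" and \<delta>g: "\<And>n s t. nonoverlapping_intervals a b n s t \<Longrightarrow>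
      (\<Sum>i<n. t i - s i) < \<delta>g \<Longrightarrow> (\<Sum>i<n. norm (g (t i) - g (s i))) < \<epsilon> / K"
    using g[unfolded abs_cont_on_iff, rule_format, of "\<epsilon> / K"] \<open>\<epsilon> > 0\<close> \<open>K > 0\<close> by auto
  show "\<exists>\<delta>>0. \<forall>n s t. nonoverlapping_intervals a b n s t \<and> (\<Sum>i<n. t i - s i) < \<delta>
      \<longrightarrow> (\<Sum>i<n. norm (f (t i) + k * g (t i) - (f (s i) + k * g (s i)))) < \<epsilon>"
  proof (intro exI[of _ "min \<delta>f \<delta>g"] conjI allI impI)
    show "min \<delta>f \<delta>g > 0" using \<open>\<delta>f > 0\<close> \<open>\<delta>g > 0\<close> by simp
    fix n s t
    assume family: "nonoverlapping_intervals a b n s t \<and> (\<Sum>i<n. t i - s i) < min \<delta>f \<delta>g"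
    have var_f: "(\<Sum>i<n. norm (f (t i) - f (s i))) < \<epsilon> / 2" using \<delta>f family by auto
    have var_g: "(\<Sum>i<n. norm (g (t i) - g (s i))) < \<epsilon> / K" using \<delta>g family by auto
    have "(\<Sum>i<n. norm (f (t i) + k * g (t i) - (f (s i) + k * g (s i))))
        \<le> (\<Sum>i<n. norm (f (t i) - f (s i))) + norm k * (\<Sum>i<n. norm (g (t i) - g (s i)))"
      unfolding sum_distrib_left sum.distrib[symmetric]
      by (intro sum_mono) (metis add_diff_add norm_mult norm_triangle_ineq right_diff_distrib)
    also have "\<dots> < \<epsilon> / 2 + \<epsilon> / 2"
      using var_f mult_left_mono[OF less_imp_le[OF var_g] norm_ge_zero[of k]] g_weight
      by linarith
    finally show "(\<Sum>i<n. norm (f (t i) + k * g (t i) - (f (s i) + k * g (s i)))) < \<epsilon>"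
      by simp
  qed
qed

lemma quasi_derivs_add_const:
  fixes c :: complex
  assumes q: "quasi_derivs m a b P y d" and "m \<ge> 3"
  defines "d' \<equiv> d(m - 1 := (\<lambda>x. d (m - 1) x + inverse (\<i> ^ m) * c * d 0 x))"
  shows "quasi_derivs m a b (\<lambda>x. P x + c) y d'"
proof -
  have unchanged: "d' k = d k" if "k \<noteq> m - 1" for k using that by (simp add: d'_def)
  have ne: "0 \<noteq> m - 1" "1 \<noteq> m - 1" "m - 2 \<noteq> m - 1" "m \<noteq> m - 1" using \<open>m \<ge> 3\<close> by auto
  note Q = q[unfolded quasi_derivs_def]
  have y: "\<forall>x\<in>{a..b}. d 0 x = y x" using Q by blast
  have d_pen': "AE x in lebesgue_on {a<..<b}.
      (d (m - 2) has_vector_derivative (d (m - 1) x - inverse (\<i> ^ m) * P x * y x)) (at x)"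
    and d_last': "AE x in lebesgue_on {a<..<b}.
      (d (m - 1) has_vector_derivative (d m x + inverse (\<i> ^ m) * P x * d 1 x)) (at x)"
    using Q by blast+
  have d0': "AE x in lebesgue_on {a<..<b}. (d 0 has_vector_derivative d 1 x) (at x)"
  proof -
    have "0 + 1 \<le> m - 2" using \<open>m \<ge> 3\<close> by simp
    then show ?thesis using Q by (metis add_0)
  qed
  have ac: "\<forall>k<m. abs_cont_on (d' k) a b"
  proof (intro allI impI)
    fix k assume "k < m"
    show "abs_cont_on (d' k) a b"
    proof (cases "k = m - 1")
      case True
      then show ?thesis using Q \<open>m \<ge> 3\<close>
        by (simp add: d'_def abs_cont_on_add_cmult[where k = "inverse (\<i> ^ m) * c"])
    qed (use Q \<open>k < m\<close> unchanged in auto)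
  qed
  have low: "\<forall>k. k + 1 \<le> m - 2 \<longrightarrow>
      (AE x in lebesgue_on {a<..<b}. (d' k has_vector_derivative d' (k + 1) x) (at x))"
  proof (intro allI impI)
    fix k assume "k + 1 \<le> m - 2"
    then have "k \<noteq> m - 1" "k + 1 \<noteq> m - 1" by auto
    then show "AE x in lebesgue_on {a<..<b}. (d' k has_vector_derivative d' (k + 1) x) (at x)"
      using Q \<open>k + 1 \<le> m - 2\<close> unchanged by auto
  qed
  have "AE x in lebesgue_on {a<..<b}. x \<in> {a<..<b}"
    by (rule AE_I2) (auto simp: space_restrict_space)
  with d_pen' have penultimate: "AE x in lebesgue_on {a<..<b}.
      (d' (m - 2) has_vector_derivative (d' (m - 1) x - inverse (\<i> ^ m) * (P x + c) * y x)) (at x)"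
  proof eventually_elim
    case (elim x)
    then have "d' (m - 1) x - inverse (\<i> ^ m) * (P x + c) * y x
        = d (m - 1) x - inverse (\<i> ^ m) * P x * y x"
      using y by (simp add: d'_def algebra_simps)
    then show ?case using elim unchanged[OF ne(3)] by simp
  qed
  from d_last' d0' have last: "AE x in lebesgue_on {a<..<b}.
      (d' (m - 1) has_vector_derivative (d' m x + inverse (\<i> ^ m) * (P x + c) * d' 1 x)) (at x)"
  proof eventually_elim
    case (elim x)
    have "((\<lambda>x. d (m - 1) x + inverse (\<i> ^ m) * c * d 0 x) has_vector_derivative
        (d m x + inverse (\<i> ^ m) * P x * d 1 x + inverse (\<i> ^ m) * c * d 1 x)) (at x)"
      using elim by (intro has_vector_derivative_add has_vector_derivative_mult_right) auto
    then show ?case using unchanged[OF ne(2)] unchanged[OF ne(4)]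
      by (simp add: d'_def algebra_simps)
  qed
  have "\<forall>x\<in>{a..b}. d' 0 x = y x" using y unchanged[OF ne(1)] by simp
  with ac low penultimate last show ?thesis unfolding quasi_derivs_def by blast
qed

lemma L_max_graph_subset_add_const:
  assumes "m \<ge> 3"
  shows "L_max_graph m a b P \<subseteq> L_max_graph m a b (\<lambda>x. P x + c)"
proof
  fix p assume "p \<in> L_max_graph m a b P"
  then obtain y f d where p: "p = (y, f)" and q: "quasi_derivs m a b P y d"
    and L2: "L2_on a b (d m)" and f: "AE x in lebesgue_on {a<..<b}. f x = \<i> ^ m * d m x"
    unfolding L_max_graph_def by auto
  define d' where "d' = d(m - 1 := (\<lambda>x. d (m - 1) x + inverse (\<i> ^ m) * c * d 0 x))"
  have "quasi_derivs m a b (\<lambda>x. P x + c) y d'"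
    unfolding d'_def by (rule quasi_derivs_add_const[OF q \<open>m \<ge> 3\<close>])
  moreover have "m \<noteq> m - 1" using \<open>m \<ge> 3\<close> by simp
  then have "d' m = d m" by (simp add: d'_def)
  ultimately show "p \<in> L_max_graph m a b (\<lambda>x. P x + c)"
    unfolding L_max_graph_def using p L2 f by auto
qed

lemma L_min_graph_subset_add_const:
  assumes "m \<ge> 3"
  shows "L_min_graph m a b P \<subseteq> L_min_graph m a b (\<lambda>x. P x + c)"
proof
  fix p assume "p \<in> L_min_graph m a b P"
  then obtain y f d where p: "p = (y, f)" and q: "quasi_derivs m a b P y d"
    and L2: "L2_on a b (d m)" and bc: "\<forall>k<m. d k a = 0 \<and> d k b = 0"
    and f: "AE x in lebesgue_on {a<..<b}. f x = \<i> ^ m * d m x"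
    unfolding L_min_graph_def by auto
  define d' where "d' = d(m - 1 := (\<lambda>x. d (m - 1) x + inverse (\<i> ^ m) * c * d 0 x))"
  have "quasi_derivs m a b (\<lambda>x. P x + c) y d'"
    unfolding d'_def by (rule quasi_derivs_add_const[OF q \<open>m \<ge> 3\<close>])
  moreover have "m \<noteq> m - 1" using \<open>m \<ge> 3\<close> by simp
  then have "d' m = d m" by (simp add: d'_def)
  moreover have "\<forall>k<m. d' k a = 0 \<and> d' k b = 0" using bc \<open>m \<ge> 3\<close> by (simp add: d'_def)
  ultimately show "p \<in> L_min_graph m a b (\<lambda>x. P x + c)"
    unfolding L_min_graph_def using p L2 f by auto
qed

theorem lemma2:
  fixes a b :: real and m :: nat and Q :: "real \<Rightarrow> complex" and c :: complex
  assumes "a < b" and "m \<ge> 3" and "L1_on a b Q"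
  shows "L_max_graph m a b (\<lambda>x. Q x + c) = L_max_graph m a b Q \<and>
         L_min_graph m a b (\<lambda>x. Q x + c) = L_min_graph m a b Q"
proof -
  have shift_back: "(\<lambda>x. Q x + c + - c) = Q" by simp
  have "L_max_graph m a b (\<lambda>x. Q x + c) \<subseteq> L_max_graph m a b Q"
    using L_max_graph_subset_add_const[OF \<open>m \<ge> 3\<close>, of a b "\<lambda>x. Q x + c" "- c"] by (simp only: shift_back)
  moreover have "L_min_graph m a b (\<lambda>x. Q x + c) \<subseteq> L_min_graph m a b Q"
    using L_min_graph_subset_add_const[OF \<open>m \<ge> 3\<close>, of a b "\<lambda>x. Q x + c" "- c"] by (simp only: shift_back)
  ultimately show ?thesis
    using L_max_graph_subset_add_const[OF \<open>m \<ge> 3\<close>] L_min_graph_subset_add_const[OF \<open>m \<ge> 3\<close>]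
    by blast
qed

end
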